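(* Let $\mathcal{F}^\star$ be a probability distribution on $\mathbb{R}$ with cumulative distribution function $F$, mean $\mu$ and standard deviation $\sigma\in(0,\infty)$. Let $p,r\ge 1$ be integers and $n=pr$. Consider $n$ respondents partitioned into $p$ disjoint groups (cliques) $C_1,\dots,C_p$ each of size $r$; each respondent $i$ has an initial belief $X_i$, where $X_1,\dots,X_n$ are i.i.d. from $\mathcal{F}^\star$. After interaction each respondent $i\in C_k$ holds the updated belief $X_i'=\frac{1}{r}\sum_{j\in C_k}X_j$. Let $\hat{F}^r_p(t)=\frac{1}{n}\sum_{i=1}^n\mathbf{1}(X_i'\le t)$ be the empirical cdf of the updated beliefs. Let $F^r$ be the cdf of the mean of $r$ i.i.d. samples from $\mathcal{F}^\star$, let $\tilde{F}$ be the cdf of $N(\mu,\sigma^2)$ and $\tilde{F}^r$ the cdf of $N(\mu,\sigma^2/r)$. Then $$\mathbb{E}\big[W_1(F,\hat{F}^r_p)\big]\le \sigma\Big(1-\frac{1}{\sqrt{r}}\Big)+\frac{1}{\sqrt{p}}\int_{\mathbb{R}}\sqrt{F^r(t)(1-F^r(t))}\,dt+\sigma\sqrt{2(1-\rho^{F,\tilde{F}})}+\sigma\sqrt{\tfrac{2}{r}(1-\rho^{F^r,\tilde{F}^r})}.$$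
   Context: For probability measures on $\mathbb{R}$ with cdfs $G_1,G_2$, $W_1(G_1,G_2)=\int_{\mathbb{R}}|G_1(x)-G_2(x)|\,dx$. For two distributions $A,B$ on $\mathbb{R}$ with cdfs $G_A,G_B$, means $\mu_A,\mu_B$ and standard deviations $\sigma_A,\sigma_B>0$, $\rho^{G_A,G_B}$ denotes the Pearson correlation of the points of the quantile–quantile plot of $G_A$ and $G_B$, i.e. $\rho^{G_A,G_B}=\frac{1}{\sigma_A\sigma_B}\int_0^1 (G_A^{-1}(q)-\mu_A)(G_B^{-1}(q)-\mu_B)\,dq$, where $G^{-1}$ is the quantile function. *)

theory Defs
  imports "HOL-Probability.Probability"
begin

definition W1 :: "(real \<Rightarrow> real) \<Rightarrow> (real \<Rightarrow> real) \<Rightarrow> ennreal" where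
  "W1 G1 G2 = (\<integral>\<^sup>+ x. ennreal \<bar>G1 x - G2 x\<bar> \<partial>lborel)"

definition quantile :: "(real \<Rightarrow> real) \<Rightarrow> real \<Rightarrow> real" where
  "quantile G q = Inf {x. q \<le> G x}"

text \<open>Pearson correlation of the points of the QQ plot of GA and GB, given the
  means and standard deviations of the two distributions.\<close>
definition qq_corr ::
  "(real \<Rightarrow> real) \<Rightarrow> (real \<Rightarrow> real) \<Rightarrow> real \<Rightarrow> real \<Rightarrow> real \<Rightarrow> real \<Rightarrow> real" where
  "qq_corr GA GB muA muB sA sB =
     (1 / (sA * sB)) *
     (LINT q:{0<..<1}|lborel. (quantile GA q - muA) * (quantile GB q - muB))"

definition normal_cdf :: "real \<Rightarrow> real \<Rightarrow> real \<Rightarrow> real" where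
  "normal_cdf mu s = cdf (density lborel (normal_density mu s))"

definition mean_cdf :: "real measure \<Rightarrow> nat \<Rightarrow> real \<Rightarrow> real" where
  "mean_cdf M r = cdf (distr (PiM {..<r} (\<lambda>_. M)) borel (\<lambda>\<omega>. (\<Sum>i<r. \<omega> i) / real r))"

end

theory Submission
  imports Defs
begin

text \<open>
  Split \<open>W1(F, F\<^sub>p\<^sup>r)\<close> by the triangle inequality at the cdf \<open>F\<^sup>r\<close> of the mean of \<open>r\<close> samples.

  All \<open>r\<close> members of a clique hold the same updated belief, so the empirical cdf of the
  updated beliefs is the empirical cdf of the \<open>p\<close> clique means, which are independent with
  cdf \<open>F\<^sup>r\<close>. At each \<open>t\<close> it is an average of \<open>p\<close> Bernoulli variables, so its expected
  distance from \<open>F\<^sup>r(t)\<close> is at most \<open>sqrt (F\<^sup>r(t) (1 - F\<^sup>r(t)) / p)\<close>; Fubini integrates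
  this over \<open>t\<close>.

  The deterministic term \<open>W1(F, F\<^sup>r)\<close> is split further at \<open>N(\<mu>, \<sigma>\<^sup>2)\<close> and
  \<open>N(\<mu>, \<sigma>\<^sup>2/r)\<close>. Every coupling \<open>(X, Y)\<close> gives \<open>W1 \<le> E|X - Y|\<close>. Scaling one standard
  normal \<open>Z\<close> couples the two normals at cost \<open>\<sigma> (1 - 1/sqrt r) E|Z| \<le> \<sigma> (1 - 1/sqrt r)\<close>.
  Two distributions with common mean and variance \<open>s\<^sup>2\<close>, coupled through their quantile
  functions of one uniform variable, have \<open>E (Q\<^sub>A - Q\<^sub>B)\<^sup>2 = 2 s\<^sup>2 (1 - \<rho>)\<close>.
\<close>

section \<open>Couplings and second moments\<close>

lemma W1_commute: "W1 F G = W1 G F"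
  unfolding W1_def by (simp add: abs_minus_commute)

lemma W1_triangle:
  assumes [measurable]: "F \<in> borel_measurable borel" "G \<in> borel_measurable borel"
    "H \<in> borel_measurable borel"
  shows "W1 F H \<le> W1 F G + W1 G H"
proof -
  have "W1 F H \<le> (\<integral>\<^sup>+ x. ennreal \<bar>F x - G x\<bar> + ennreal \<bar>G x - H x\<bar> \<partial>lborel)"
    unfolding W1_def by (intro nn_integral_mono) (simp flip: ennreal_plus)
  also have "\<dots> = W1 F G + W1 G H"
    unfolding W1_def by (rule nn_integral_add) auto
  finally show ?thesis .
qed

lemma borel_measurable_cdf: "real_distribution N \<Longrightarrow> cdf N \<in> borel_measurable borel"
  using cdf_distribution.measurable_C[of N] by (simp add: cdf_distribution_def)

lemma cdf_distr: "X \<in> borel_measurable P \<Longrightarrow> cdf (distr P borel X) t = measure P {\<omega>\<in>space P. X \<omega> \<le> t}"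
  by (simp add: cdf_def measure_distr vimage_def Int_def conj_commute)

lemma W1_cdf_distr_le:
  assumes "prob_space P" and [measurable]: "X \<in> borel_measurable P" "Y \<in> borel_measurable P"
  shows "W1 (cdf (distr P borel X)) (cdf (distr P borel Y)) \<le> (\<integral>\<^sup>+ \<omega>. ennreal \<bar>X \<omega> - Y \<omega>\<bar> \<partial>P)"
proof -
  interpret prob_space P by fact
  interpret pair_sigma_finite lborel P by unfold_locales
  \<comment> \<open>\<open>|1[X \<omega> \<le> t] - 1[Y \<omega> \<le> t]|\<close> is the indicator of \<open>t \<in> between \<omega>\<close>, whose length is \<open>|X \<omega> - Y \<omega>|\<close>\<close>
  define between where "between \<omega> = {min (X \<omega>) (Y \<omega>) ..< max (X \<omega>) (Y \<omega>)}" for \<omega>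
  have [measurable]: "(\<lambda>(t, \<omega>). indicator (between \<omega>) t :: ennreal) \<in> borel_measurable (lborel \<Otimes>\<^sub>M P)"
    unfolding between_def indicator_def atLeastLessThan_iff by measurable
  have cdf_diff: "ennreal \<bar>cdf (distr P borel X) t - cdf (distr P borel Y) t\<bar>
      \<le> (\<integral>\<^sup>+ \<omega>. indicator (between \<omega>) t \<partial>P)" for t
  proof -
    let ?A = "{\<omega>\<in>space P. X \<omega> \<le> t}" and ?B = "{\<omega>\<in>space P. Y \<omega> \<le> t}"
    have A: "?A \<in> events" and B: "?B \<in> events" by measurable
    have "\<bar>prob ?A - prob ?B\<bar> \<le> prob (?A - ?B) + prob (?B - ?A)"
      using finite_measure_Diff'[OF A B] finite_measure_Diff'[OF B A]
        finite_measure_mono[of "?A \<inter> ?B" ?A] finite_measure_mono[of "?A \<inter> ?B" ?B] A B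
      by (simp add: Int_commute)
    also have "\<dots> = prob ((?A - ?B) \<union> (?B - ?A))"
      using A B by (subst finite_measure_Union) auto
    also have "(?A - ?B) \<union> (?B - ?A) = {\<omega>\<in>space P. t \<in> between \<omega>}"
      by (auto simp: between_def)
    finally have "ennreal \<bar>prob ?A - prob ?B\<bar> \<le> emeasure P {\<omega>\<in>space P. t \<in> between \<omega>}"
      by (simp add: emeasure_eq_measure)
    also have "\<dots> = (\<integral>\<^sup>+ \<omega>. indicator {\<omega>\<in>space P. t \<in> between \<omega>} \<omega> \<partial>P)"
      by (rule nn_integral_indicator[symmetric]) (simp add: between_def)
    also have "\<dots> = (\<integral>\<^sup>+ \<omega>. indicator (between \<omega>) t \<partial>P)"
      by (intro nn_integral_cong) (auto split: split_indicator)
    finally show ?thesis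
      by (simp add: cdf_distr)
  qed
  have "W1 (cdf (distr P borel X)) (cdf (distr P borel Y))
      \<le> (\<integral>\<^sup>+ t. (\<integral>\<^sup>+ \<omega>. indicator (between \<omega>) t \<partial>P) \<partial>lborel)"
    unfolding W1_def by (intro nn_integral_mono cdf_diff)
  also have "\<dots> = (\<integral>\<^sup>+ \<omega>. (\<integral>\<^sup>+ t. indicator (between \<omega>) t \<partial>lborel) \<partial>P)"
    by (rule Fubini'[symmetric]) measurable
  also have "\<dots> = (\<integral>\<^sup>+ \<omega>. ennreal \<bar>X \<omega> - Y \<omega>\<bar> \<partial>P)"
    by (intro nn_integral_cong) (auto simp: between_def max_def min_def)
  finally show ?thesis .
qed

lemma (in prob_space) nn_integral_abs_le_sqrt_second_moment:
  fixes f :: "'a \<Rightarrow> real"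
  assumes [measurable]: "f \<in> borel_measurable M" and "integrable M (\<lambda>x. (f x)\<^sup>2)"
  shows "(\<integral>\<^sup>+ x. ennreal \<bar>f x\<bar> \<partial>M) \<le> ennreal (sqrt (expectation (\<lambda>x. (f x)\<^sup>2)))"
proof -
  have "integrable M (\<lambda>x. \<bar>f x\<bar>)"
    using square_integrable_imp_integrable[OF assms] by simp
  then have "(expectation (\<lambda>x. \<bar>f x\<bar>))\<^sup>2 \<le> expectation (\<lambda>x. (f x)\<^sup>2)"
    using variance_positive[of "\<lambda>x. \<bar>f x\<bar>"] variance_eq[of "\<lambda>x. \<bar>f x\<bar>"] assms(2) by simp
  then have "expectation (\<lambda>x. \<bar>f x\<bar>) \<le> sqrt (expectation (\<lambda>x. (f x)\<^sup>2))"
    by (simp add: real_le_rsqrt)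
  with \<open>integrable M (\<lambda>x. \<bar>f x\<bar>)\<close> show ?thesis
    by (subst nn_integral_eq_integral) auto
qed

lemma integrable_mult_of_square_integrable:
  fixes f g :: "'a \<Rightarrow> real"
  assumes [measurable]: "f \<in> borel_measurable M" "g \<in> borel_measurable M"
    and "integrable M (\<lambda>x. (f x)\<^sup>2)" "integrable M (\<lambda>x. (g x)\<^sup>2)"
  shows "integrable M (\<lambda>x. f x * g x)"
proof (rule Bochner_Integration.integrable_bound)
  show "integrable M (\<lambda>x. (f x)\<^sup>2 + (g x)\<^sup>2)"
    using assms(3,4) by simp
  show "AE x in M. norm (f x * g x) \<le> norm ((f x)\<^sup>2 + (g x)\<^sup>2)"
  proof (intro AE_I2)
    fix x
    have "2 * \<bar>f x * g x\<bar> \<le> (f x)\<^sup>2 + (g x)\<^sup>2"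
      using sum_squares_bound[of "\<bar>f x\<bar>" "\<bar>g x\<bar>"] by (simp add: abs_mult mult.assoc)
    then show "norm (f x * g x) \<le> norm ((f x)\<^sup>2 + (g x)\<^sup>2)"
      using abs_ge_zero[of "f x * g x"] by simp
  qed
qed simp

lemma (in prob_space) expectation_square_sum_pairwise_indep:
  fixes Y :: "'i \<Rightarrow> 'a \<Rightarrow> real"
  assumes "finite I"
    and [measurable]: "\<And>i. i \<in> I \<Longrightarrow> Y i \<in> borel_measurable M"
    and square_int: "\<And>i. i \<in> I \<Longrightarrow> integrable M (\<lambda>x. (Y i x)\<^sup>2)"
    and centered: "\<And>i. i \<in> I \<Longrightarrow> expectation (Y i) = 0"
    and indep: "\<And>i j. i \<in> I \<Longrightarrow> j \<in> I \<Longrightarrow> i \<noteq> j \<Longrightarrow> indep_var borel (Y i) borel (Y j)"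
  shows "integrable M (\<lambda>x. (\<Sum>i\<in>I. Y i x)\<^sup>2)"
    and "expectation (\<lambda>x. (\<Sum>i\<in>I. Y i x)\<^sup>2) = (\<Sum>i\<in>I. expectation (\<lambda>x. (Y i x)\<^sup>2))"
proof -
  have square_sum: "(\<Sum>i\<in>I. Y i x)\<^sup>2 = (\<Sum>i\<in>I. \<Sum>j\<in>I. Y i x * Y j x)" for x
    by (simp add: power2_eq_square sum_product)
  have products_integrable: "integrable M (\<lambda>x. Y i x * Y j x)" if "i \<in> I" "j \<in> I" for i j
    using that by (intro integrable_mult_of_square_integrable square_int) auto
  have cross: "expectation (\<lambda>x. Y i x * Y j x) = (if i = j then expectation (\<lambda>x. (Y i x)\<^sup>2) else 0)"
    if "i \<in> I" "j \<in> I" for i j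
  proof (cases "i = j")
    case False
    have "integrable M (Y k)" if "k \<in> I" for k
      using that by (auto intro: square_integrable_imp_integrable[OF _ square_int])
    with that show ?thesis
      using indep_var_lebesgue_integral[OF indep[OF that False]] False centered by simp
  qed (simp add: power2_eq_square)
  show "integrable M (\<lambda>x. (\<Sum>i\<in>I. Y i x)\<^sup>2)"
    unfolding square_sum by (intro Bochner_Integration.integrable_sum products_integrable)
  have "expectation (\<lambda>x. (\<Sum>i\<in>I. Y i x)\<^sup>2) = (\<Sum>i\<in>I. \<Sum>j\<in>I. expectation (\<lambda>x. Y i x * Y j x))"
    unfolding square_sum using products_integrable
    by (subst Bochner_Integration.integral_sum)
       (auto intro!: Bochner_Integration.integrable_sum Bochner_Integration.integral_sum sum.cong)
  also have "\<dots> = (\<Sum>i\<in>I. \<Sum>j\<in>I. if i = j then expectation (\<lambda>x. (Y i x)\<^sup>2) else 0)"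
    by (intro sum.cong refl cross)
  also have "\<dots> = (\<Sum>i\<in>I. expectation (\<lambda>x. (Y i x)\<^sup>2))"
    using \<open>finite I\<close> by simp
  finally show "expectation (\<lambda>x. (\<Sum>i\<in>I. Y i x)\<^sup>2) = (\<Sum>i\<in>I. expectation (\<lambda>x. (Y i x)\<^sup>2))" .
qed

section \<open>Quantile coupling and normal distributions\<close>

abbreviation unit_interval :: "real measure" where
  "unit_interval \<equiv> restrict_space lborel {0<..<1}"

lemma prob_space_unit_interval: "prob_space unit_interval"
  by (auto simp: emeasure_restrict_space space_restrict_space intro!: prob_spaceI)

lemma
  assumes "real_distribution N"
  shows borel_measurable_quantile: "quantile (cdf N) \<in> borel_measurable unit_interval"
    and distr_quantile: "distr unit_interval borel (quantile (cdf N)) = N"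
proof -
  interpret cdf_distribution N
    using assms by (simp add: cdf_distribution_def)
  show "quantile (cdf N) \<in> borel_measurable unit_interval"
    using measurable_CI unfolding quantile_def[abs_def]
    by (subst measurable_cong_sets[OF sets_restrict_space_cong[OF sets_lborel] refl])
  show "distr unit_interval borel (quantile (cdf N)) = N"
    unfolding quantile_def[abs_def] by (rule distr_I_eq_M)
qed

lemma qq_corr_eq_integral:
  "qq_corr GA GB muA muB sA sB
     = (\<integral>q. (quantile GA q - muA) * (quantile GB q - muB) \<partial>unit_interval) / (sA * sB)"
  unfolding qq_corr_def set_lebesgue_integral_def by (simp add: integral_restrict_space)

lemma
  fixes f :: "real \<Rightarrow> real"
  assumes "real_distribution N" and [measurable]: "f \<in> borel_measurable borel"
  shows integrable_quantile_iff: "integrable unit_interval (\<lambda>q. f (quantile (cdf N) q)) \<longleftrightarrow> integrable N f"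
    and integral_quantile: "(\<integral>q. f (quantile (cdf N) q) \<partial>unit_interval) = (\<integral>x. f x \<partial>N)"
  using integrable_distr_eq[OF borel_measurable_quantile[OF assms(1)], of f]
    integral_distr[OF borel_measurable_quantile[OF assms(1)], of f]
  by (simp_all add: distr_quantile[OF assms(1)])

lemma W1_le_qq_corr:
  assumes N1: "real_distribution N1" and N2: "real_distribution N2"
    and int1: "integrable N1 (\<lambda>x. (x - m)\<^sup>2)" and int2: "integrable N2 (\<lambda>x. (x - m)\<^sup>2)"
    and var1: "(\<integral>x. (x - m)\<^sup>2 \<partial>N1) = s\<^sup>2" and var2: "(\<integral>x. (x - m)\<^sup>2 \<partial>N2) = s\<^sup>2"
    and "s > 0"
  shows "W1 (cdf N1) (cdf N2) \<le> ennreal (s * sqrt (2 * (1 - qq_corr (cdf N1) (cdf N2) m m s s)))"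
proof -
  interpret U: prob_space unit_interval by (rule prob_space_unit_interval)
  define a where "a q = quantile (cdf N1) q - m" for q
  define b where "b q = quantile (cdf N2) q - m" for q
  have [measurable]: "a \<in> borel_measurable unit_interval" "b \<in> borel_measurable unit_interval"
    using borel_measurable_quantile[OF N1] borel_measurable_quantile[OF N2]
    unfolding a_def[abs_def] b_def[abs_def] by measurable
  have a2: "integrable unit_interval (\<lambda>q. (a q)\<^sup>2)" "(\<integral>q. (a q)\<^sup>2 \<partial>unit_interval) = s\<^sup>2"
    using integrable_quantile_iff[OF N1, of "\<lambda>x. (x - m)\<^sup>2"] integral_quantile[OF N1, of "\<lambda>x. (x - m)\<^sup>2"]
      int1 var1 by (simp_all add: a_def)
  have b2: "integrable unit_interval (\<lambda>q. (b q)\<^sup>2)" "(\<integral>q. (b q)\<^sup>2 \<partial>unit_interval) = s\<^sup>2"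
    using integrable_quantile_iff[OF N2, of "\<lambda>x. (x - m)\<^sup>2"] integral_quantile[OF N2, of "\<lambda>x. (x - m)\<^sup>2"]
      int2 var2 by (simp_all add: b_def)
  have ab: "integrable unit_interval (\<lambda>q. a q * b q)"
    by (rule integrable_mult_of_square_integrable) (use a2 b2 in auto)
  have ab_corr: "(\<integral>q. a q * b q \<partial>unit_interval) = s\<^sup>2 * qq_corr (cdf N1) (cdf N2) m m s s"
    using \<open>s > 0\<close> by (simp add: qq_corr_eq_integral a_def b_def power2_eq_square)
  have diff_square: "(a q - b q)\<^sup>2 = (a q)\<^sup>2 + (b q)\<^sup>2 - 2 * (a q * b q)" for q
    by (simp add: power2_diff)
  have "W1 (cdf N1) (cdf N2) = W1 (cdf (distr unit_interval borel (quantile (cdf N1))))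
                                  (cdf (distr unit_interval borel (quantile (cdf N2))))"
    by (simp add: distr_quantile N1 N2)
  also have "\<dots> \<le> (\<integral>\<^sup>+ q. ennreal \<bar>a q - b q\<bar> \<partial>unit_interval)"
    using W1_cdf_distr_le[OF U.prob_space_axioms borel_measurable_quantile[OF N1]
        borel_measurable_quantile[OF N2]] by (simp add: a_def b_def)
  also have "\<dots> \<le> ennreal (sqrt (\<integral>q. (a q - b q)\<^sup>2 \<partial>unit_interval))"
    by (rule U.nn_integral_abs_le_sqrt_second_moment) (use a2 b2 ab in \<open>auto simp: diff_square\<close>)
  also have "(\<integral>q. (a q - b q)\<^sup>2 \<partial>unit_interval) = s\<^sup>2 + s\<^sup>2 - 2 * (s\<^sup>2 * qq_corr (cdf N1) (cdf N2) m m s s)"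
    using a2 b2 ab by (simp add: diff_square ab_corr)
  also have "\<dots> = s\<^sup>2 * (2 * (1 - qq_corr (cdf N1) (cdf N2) m m s s))"
    by (simp add: algebra_simps)
  finally show ?thesis
    using \<open>s > 0\<close> by (simp add: real_sqrt_mult)
qed

lemma
  assumes "s > 0"
  shows real_distribution_normal: "real_distribution (density lborel (normal_density m s))"
    and integrable_normal_centered_square:
      "integrable (density lborel (normal_density m s)) (\<lambda>x. (x - m)\<^sup>2)"
    and integral_normal_centered_square:
      "(\<integral>x. (x - m)\<^sup>2 \<partial>density lborel (normal_density m s)) = s\<^sup>2"
proof -
  show "real_distribution (density lborel (normal_density m s))"
    using prob_space_normal_density[OF assms] by (simp add: real_distribution_def real_distribution_axioms_def)
  show "integrable (density lborel (normal_density m s)) (\<lambda>x. (x - m)\<^sup>2)"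
    using integrable_normal_moment[of s m 2] assms by (subst integrable_density) auto
  show "(\<integral>x. (x - m)\<^sup>2 \<partial>density lborel (normal_density m s)) = s\<^sup>2"
    using integral_normal_moment_even[OF assms, of m 1] assms by (subst integral_density) auto
qed

lemma cdf_distr_std_normal_affine:
  assumes "s > 0"
  shows "cdf (distr (density lborel std_normal_density) borel (\<lambda>x. m + s * x)) = normal_cdf m s"
proof -
  interpret Z: prob_space "density lborel std_normal_density"
    by (rule prob_space_normal_density) simp
  have "distributed (density lborel std_normal_density) lborel (\<lambda>x. m + s * x) (normal_density m s)"
    using Z.normal_density_affine[of "\<lambda>x. x" 0 1 s m] assms
    by (simp add: distributed_def distr_id2)
  then show ?thesis
    unfolding normal_cdf_def distributed_def by (simp add: cdf_def cong: distr_cong)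
qed

lemma W1_normal_cdf_le:
  assumes "s1 > 0" "s2 > 0"
  shows "W1 (normal_cdf m s1) (normal_cdf m s2) \<le> ennreal \<bar>s1 - s2\<bar>"
proof -
  let ?Z = "density lborel std_normal_density"
  interpret Z: prob_space ?Z by (rule prob_space_normal_density) simp
  have Z2: "integrable ?Z (\<lambda>x. x\<^sup>2)" "(\<integral>x. x\<^sup>2 \<partial>?Z) = 1"
    using integrable_std_normal_moment[of 2] integral_std_normal_moment_even[of 1]
    by (simp_all add: integrable_density integral_density)
  have "W1 (normal_cdf m s1) (normal_cdf m s2) \<le> (\<integral>\<^sup>+ x. ennreal \<bar>(m + s1 * x) - (m + s2 * x)\<bar> \<partial>?Z)"
    using W1_cdf_distr_le[OF Z.prob_space_axioms, of "\<lambda>x. m + s1 * x" "\<lambda>x. m + s2 * x"] assms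
    by (simp add: cdf_distr_std_normal_affine)
  also have "\<dots> = ennreal \<bar>s1 - s2\<bar> * (\<integral>\<^sup>+ x. ennreal \<bar>x\<bar> \<partial>?Z)"
    by (subst nn_integral_cmult[symmetric])
       (auto intro!: nn_integral_cong simp: abs_mult ennreal_mult simp flip: left_diff_distrib)
  also have "\<dots> \<le> ennreal \<bar>s1 - s2\<bar> * ennreal (sqrt (\<integral>x. x\<^sup>2 \<partial>?Z))"
    by (intro mult_left_mono Z.nn_integral_abs_le_sqrt_second_moment Z2) auto
  finally show ?thesis
    by (simp add: Z2)
qed

lemma W1_cdf_normal_cdf_le:
  assumes "real_distribution N" and "integrable N (\<lambda>x. (x - m)\<^sup>2)" "(\<integral>x. (x - m)\<^sup>2 \<partial>N) = s\<^sup>2"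
    and "s > 0"
  shows "W1 (cdf N) (normal_cdf m s) \<le> ennreal (s * sqrt (2 * (1 - qq_corr (cdf N) (normal_cdf m s) m m s s)))"
  using W1_le_qq_corr[OF assms(1) real_distribution_normal assms(2) integrable_normal_centered_square
      assms(3) integral_normal_centered_square] \<open>s > 0\<close>
  by (simp add: normal_cdf_def)

section \<open>Product measures and sample means\<close>

lemma indep_vars_PiM_components:
  assumes "prob_space M"
  shows "prob_space.indep_vars (PiM I (\<lambda>_. M)) (\<lambda>_. M) (\<lambda>i \<omega>. \<omega> i) I"
proof -
  interpret P: prob_space "PiM I (\<lambda>_. M)"
    by (rule prob_space_PiM) (use assms in auto)
  show ?thesis
  proof (cases "I = {}")
    case True
    then show ?thesis
      unfolding P.indep_vars_def P.indep_sets_def by simp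
  next
    case False
    have "distr (PiM I (\<lambda>_. M)) (PiM I (\<lambda>_. M)) (\<lambda>\<omega>. \<lambda>i\<in>I. \<omega> i) = PiM I (\<lambda>_. M)"
      by (subst distr_cong[OF refl refl, where g="\<lambda>\<omega>. \<omega>"]) (auto simp: space_PiM)
    also have "\<dots> = PiM I (\<lambda>i. distr (PiM I (\<lambda>_. M)) M (\<lambda>\<omega>. \<omega> i))"
      using distr_PiM_component[of I "\<lambda>_. M"] assms by (intro PiM_cong) auto
    finally show ?thesis
      using False by (subst P.indep_vars_iff_distr_eq_PiM') auto
  qed
qed

lemma indep_var_PiM_restrict:
  assumes "prob_space M" and "A \<inter> B = {}" "A \<subseteq> I" "B \<subseteq> I"
    and "f \<in> borel_measurable (PiM A (\<lambda>_. M))" "h \<in> borel_measurable (PiM B (\<lambda>_. M))"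
  shows "prob_space.indep_var (PiM I (\<lambda>_. M)) borel (\<lambda>\<omega>. f (restrict \<omega> A)) borel (\<lambda>\<omega>. h (restrict \<omega> B))"
proof -
  interpret P: prob_space "PiM I (\<lambda>_. M)"
    by (rule prob_space_PiM) (use assms in auto)
  show ?thesis
    using P.indep_var_compose[OF P.indep_var_restrict[OF indep_vars_PiM_components] assms(5,6)]
      assms by (simp add: comp_def)
qed

lemma distr_PiM_block_mean:
  fixes M :: "real measure"
  assumes "prob_space M" and [measurable_cong]: "sets M = sets borel"
    and "B \<subseteq> I" "finite B" "card B = r"
  shows "distr (PiM I (\<lambda>_. M)) borel (\<lambda>\<omega>. (\<Sum>j\<in>B. \<omega> j) / real r)
       = distr (PiM {..<r} (\<lambda>_. M)) borel (\<lambda>\<omega>. (\<Sum>i<r. \<omega> i) / real r)"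
proof -
  obtain h where h: "bij_betw h {..<r} B"
    using ex_bij_betw_nat_finite[OF \<open>finite B\<close>] \<open>card B = r\<close> by (auto simp: atLeast0LessThan)
  then have h_inj: "inj_on h {..<r}" and h_into: "h \<in> {..<r} \<rightarrow> I"
    using \<open>B \<subseteq> I\<close> by (auto simp: bij_betw_def)
  define T where "T \<omega> = (\<lambda>i\<in>{..<r}. \<omega> (h i))" for \<omega> :: "'a \<Rightarrow> real"
  have T_distr: "distr (PiM I (\<lambda>_. M)) (PiM {..<r} (\<lambda>_. M)) T = PiM {..<r} (\<lambda>_. M)"
    using distr_PiM_reindex[of I "\<lambda>_. M" h "{..<r}"] assms h_inj h_into unfolding T_def by simp
  have T_meas: "T \<in> measurable (PiM I (\<lambda>_. M)) (PiM {..<r} (\<lambda>_. M))"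
    unfolding T_def using h_into by (intro measurable_restrict) (auto intro!: measurable_component_singleton)
  have "(\<Sum>j\<in>B. \<omega> j) = (\<Sum>i<r. T \<omega> i)" for \<omega>
    using sum.reindex_bij_betw[OF h, of \<omega>] by (simp add: T_def)
  then have "distr (PiM I (\<lambda>_. M)) borel (\<lambda>\<omega>. (\<Sum>j\<in>B. \<omega> j) / real r)
      = distr (distr (PiM I (\<lambda>_. M)) (PiM {..<r} (\<lambda>_. M)) T) borel (\<lambda>\<omega>. (\<Sum>i<r. \<omega> i) / real r)"
    by (subst distr_distr[OF _ T_meas]) (simp_all add: comp_def)
  then show ?thesis
    by (simp only: T_distr)
qed

lemma integrable_centered_square:
  fixes M :: "real measure"
  assumes "finite_measure M" "sets M = sets borel" "integrable M (\<lambda>x. x\<^sup>2)"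
  shows "integrable M (\<lambda>x. (x - m)\<^sup>2)"
proof -
  interpret finite_measure M by fact
  have "integrable M (\<lambda>x. x)"
    by (rule square_integrable_imp_integrable[OF _ assms(3)]) (simp add: measurable_cong_sets[OF assms(2)])
  with assms(3) show ?thesis
    by (simp add: power2_diff)
qed

lemma real_distribution_sample_mean:
  fixes M :: "real measure"
  assumes "prob_space M" and [measurable_cong]: "sets M = sets borel"
  shows "real_distribution (distr (PiM {..<r} (\<lambda>_. M)) borel (\<lambda>\<omega>. (\<Sum>i<r. \<omega> i) / real r))"
proof -
  interpret P: prob_space "PiM {..<r} (\<lambda>_. M)"
    by (rule prob_space_PiM) (use assms in auto)
  show ?thesis
    by (rule P.real_distribution_distr) measurable
qed

lemma borel_measurable_mean_cdf:
  fixes M :: "real measure"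
  assumes "prob_space M" "sets M = sets borel"
  shows "mean_cdf M r \<in> borel_measurable borel"
  unfolding mean_cdf_def by (rule borel_measurable_cdf[OF real_distribution_sample_mean[OF assms]])

lemma
  fixes M :: "real measure" and f :: "real \<Rightarrow> real"
  assumes M: "prob_space M" and [measurable_cong]: "sets M = sets borel" and "finite I"
    and [measurable]: "f \<in> borel_measurable borel"
    and f_square: "integrable M (\<lambda>x. (f x)\<^sup>2)" and f_centered: "(\<integral>x. f x \<partial>M) = 0"
  shows integrable_PiM_square_sum: "integrable (PiM I (\<lambda>_. M)) (\<lambda>\<omega>. (\<Sum>i\<in>I. f (\<omega> i))\<^sup>2)"
    and integral_PiM_square_sum:
      "(\<integral>\<omega>. (\<Sum>i\<in>I. f (\<omega> i))\<^sup>2 \<partial>PiM I (\<lambda>_. M)) = real (card I) * (\<integral>x. (f x)\<^sup>2 \<partial>M)"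
proof -
  interpret M: prob_space M by fact
  interpret P: prob_space "PiM I (\<lambda>_. M)" by (rule prob_space_PiM) (rule M)
  have component: "integrable (PiM I (\<lambda>_. M)) (\<lambda>\<omega>. h (\<omega> i)) \<longleftrightarrow> integrable M h"
    "P.expectation (\<lambda>\<omega>. h (\<omega> i)) = (\<integral>x. h x \<partial>M)"
    if "i \<in> I" "h \<in> borel_measurable borel" for i and h :: "real \<Rightarrow> real"
    using that integrable_distr_eq[of "\<lambda>\<omega>. \<omega> i" "PiM I (\<lambda>_. M)" M h]
      integral_distr[of "\<lambda>\<omega>. \<omega> i" "PiM I (\<lambda>_. M)" M h] distr_PiM_component[of I "\<lambda>_. M" i] M
    by simp_all
  have f_component: "(\<lambda>x. f (x i)) \<in> borel_measurable (PiM {i} (\<lambda>_. M))" for i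
    by measurable
  have "P.indep_var borel (\<lambda>\<omega>. f (\<omega> i)) borel (\<lambda>\<omega>. f (\<omega> j))" if "i \<in> I" "j \<in> I" "i \<noteq> j" for i j
    using indep_var_PiM_restrict[OF M _ _ _ f_component[of i] f_component[of j], of I] that by simp
  moreover have "integrable (PiM I (\<lambda>_. M)) (\<lambda>\<omega>. (f (\<omega> i))\<^sup>2)" "P.expectation (\<lambda>\<omega>. f (\<omega> i)) = 0"
    "P.expectation (\<lambda>\<omega>. (f (\<omega> i))\<^sup>2) = (\<integral>x. (f x)\<^sup>2 \<partial>M)" if "i \<in> I" for i
    using component[OF that, of "\<lambda>x. (f x)\<^sup>2"] component[OF that, of f] f_square f_centered by simp_all
  ultimately show "integrable (PiM I (\<lambda>_. M)) (\<lambda>\<omega>. (\<Sum>i\<in>I. f (\<omega> i))\<^sup>2)"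
    and "(\<integral>\<omega>. (\<Sum>i\<in>I. f (\<omega> i))\<^sup>2 \<partial>PiM I (\<lambda>_. M)) = real (card I) * (\<integral>x. (f x)\<^sup>2 \<partial>M)"
    using P.expectation_square_sum_pairwise_indep[of I "\<lambda>i \<omega>. f (\<omega> i)"] \<open>finite I\<close> by auto
qed

lemma
  fixes M :: "real measure"
  assumes M: "prob_space M" and M_borel: "sets M = sets borel"
    and sq_int: "integrable M (\<lambda>x. x\<^sup>2)" and mu: "\<mu> = (\<integral>x. x \<partial>M)" and "r \<ge> 1"
  defines "D \<equiv> distr (PiM {..<r} (\<lambda>_. M)) borel (\<lambda>\<omega>. (\<Sum>i<r. \<omega> i) / real r)"
  shows integrable_sample_mean_centered_square: "integrable D (\<lambda>x. (x - \<mu>)\<^sup>2)"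
    and integral_sample_mean_centered_square:
      "(\<integral>x. (x - \<mu>)\<^sup>2 \<partial>D) = (\<integral>x. (x - \<mu>)\<^sup>2 \<partial>M) / real r"
proof -
  interpret M: prob_space M by fact
  have [measurable_cong]: "sets M = sets borel" by fact
  have mean_meas: "(\<lambda>\<omega>. (\<Sum>i<r. \<omega> i) / real r) \<in> borel_measurable (PiM {..<r} (\<lambda>_. M))"
    by measurable
  have "integrable M (\<lambda>x. x)"
    by (rule M.square_integrable_imp_integrable[OF _ sq_int]) simp
  then have "(\<integral>x. x - \<mu> \<partial>M) = 0"
    using mu by (simp add: M.prob_space)
  note square_sum = integrable_PiM_square_sum[OF M M_borel finite_lessThan, of "\<lambda>x. x - \<mu>"]
    integral_PiM_square_sum[OF M M_borel finite_lessThan, of "\<lambda>x. x - \<mu>"]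
  note centered = integrable_centered_square[OF M.finite_measure_axioms M_borel sq_int] \<open>(\<integral>x. x - \<mu> \<partial>M) = 0\<close>
  have mean_square: "((\<Sum>i<r. \<omega> i) / real r - \<mu>)\<^sup>2 = (\<Sum>i<r. \<omega> i - \<mu>)\<^sup>2 / (real r)\<^sup>2" for \<omega>
    using \<open>r \<ge> 1\<close> by (simp add: sum_subtractf field_simps)
  show "integrable D (\<lambda>x. (x - \<mu>)\<^sup>2)"
    unfolding D_def using square_sum(1) centered
    by (subst integrable_distr_eq[OF mean_meas]) (auto simp: mean_square)
  have "(\<integral>x. (x - \<mu>)\<^sup>2 \<partial>D) = (\<integral>\<omega>. (\<Sum>i<r. \<omega> i - \<mu>)\<^sup>2 \<partial>PiM {..<r} (\<lambda>_. M)) / (real r)\<^sup>2"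
    unfolding D_def by (subst integral_distr[OF mean_meas]) (simp_all add: mean_square)
  then show "(\<integral>x. (x - \<mu>)\<^sup>2 \<partial>D) = (\<integral>x. (x - \<mu>)\<^sup>2 \<partial>M) / real r"
    using square_sum(2) centered \<open>r \<ge> 1\<close> by (simp add: power2_eq_square)
qed

lemma W1_normal_cdf_mean_cdf_le:
  fixes M :: "real measure"
  assumes M: "prob_space M" and M_borel: "sets M = sets borel" and sq_int: "integrable M (\<lambda>x. x\<^sup>2)"
    and mu: "\<mu> = (\<integral>x. x \<partial>M)" and var_M: "(\<integral>x. (x - \<mu>)\<^sup>2 \<partial>M) = \<sigma>\<^sup>2"
    and "\<sigma> > 0" and "r \<ge> 1"
  defines "s \<equiv> \<sigma> / sqrt (real r)"
  shows "W1 (normal_cdf \<mu> s) (mean_cdf M r)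
    \<le> ennreal (\<sigma> * sqrt (2 / real r * (1 - qq_corr (mean_cdf M r) (normal_cdf \<mu> s) \<mu> \<mu> s s)))"
proof -
  define D where "D = distr (PiM {..<r} (\<lambda>_. M)) borel (\<lambda>\<omega>. (\<Sum>i<r. \<omega> i) / real r)"
  have "s > 0"
    using \<open>\<sigma> > 0\<close> \<open>r \<ge> 1\<close> by (simp add: s_def)
  have cdf_D: "cdf D = mean_cdf M r"
    by (simp add: D_def mean_cdf_def)
  have "(\<integral>x. (x - \<mu>)\<^sup>2 \<partial>D) = s\<^sup>2"
    using integral_sample_mean_centered_square[OF M M_borel sq_int mu \<open>r \<ge> 1\<close>, folded D_def]
      var_M \<open>r \<ge> 1\<close> by (simp add: s_def power_divide)
  then have "W1 (cdf D) (normal_cdf \<mu> s) \<le> ennreal (s * sqrt (2 * (1 - qq_corr (cdf D) (normal_cdf \<mu> s) \<mu> \<mu> s s)))"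
    using real_distribution_sample_mean[OF M M_borel, of r, folded D_def]
      integrable_sample_mean_centered_square[OF M M_borel sq_int mu \<open>r \<ge> 1\<close>, folded D_def] \<open>s > 0\<close>
    by (intro W1_cdf_normal_cdf_le)
  also have "s * sqrt (2 * (1 - qq_corr (cdf D) (normal_cdf \<mu> s) \<mu> \<mu> s s))
      = \<sigma> * sqrt (2 / real r * (1 - qq_corr (mean_cdf M r) (normal_cdf \<mu> s) \<mu> \<mu> s s))"
    by (simp add: cdf_D s_def real_sqrt_mult real_sqrt_divide)
  finally show ?thesis
    by (simp add: W1_commute cdf_D)
qed

lemma W1_cdf_mean_cdf_le:
  fixes M :: "real measure"
  assumes M: "prob_space M" and M_borel: "sets M = sets borel" and sq_int: "integrable M (\<lambda>x. x\<^sup>2)"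
    and mu: "\<mu> = (\<integral>x. x \<partial>M)" and sigma: "\<sigma> = sqrt (\<integral>x. (x - \<mu>)\<^sup>2 \<partial>M)"
    and "\<sigma> > 0" and "r \<ge> 1"
  shows "W1 (cdf M) (mean_cdf M r)
    \<le> ennreal (\<sigma> * (1 - 1 / sqrt (real r)))
      + ennreal (\<sigma> * sqrt (2 * (1 - qq_corr (cdf M) (normal_cdf \<mu> \<sigma>) \<mu> \<mu> \<sigma> \<sigma>)))
      + ennreal (\<sigma> * sqrt (2 / real r *
          (1 - qq_corr (mean_cdf M r) (normal_cdf \<mu> (\<sigma> / sqrt (real r)))
                 \<mu> \<mu> (\<sigma> / sqrt (real r)) (\<sigma> / sqrt (real r)))))"
    (is "_ \<le> ennreal ?scale + ennreal ?qq_M + ennreal ?qq_mean")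
proof -
  define s where "s = \<sigma> / sqrt (real r)"
  have "s > 0"
    using \<open>\<sigma> > 0\<close> \<open>r \<ge> 1\<close> by (simp add: s_def)
  have M_real: "real_distribution M"
    using M M_borel by (simp add: real_distribution_def real_distribution_axioms_def)
  have var_M: "(\<integral>x. (x - \<mu>)\<^sup>2 \<partial>M) = \<sigma>\<^sup>2"
    using sigma by simp
  have [measurable]: "cdf M \<in> borel_measurable borel" "mean_cdf M r \<in> borel_measurable borel"
    "normal_cdf \<mu> \<sigma> \<in> borel_measurable borel" "normal_cdf \<mu> s \<in> borel_measurable borel"
    using borel_measurable_cdf[OF M_real] borel_measurable_mean_cdf[OF M M_borel]
      borel_measurable_cdf[OF real_distribution_normal] \<open>\<sigma> > 0\<close> \<open>s > 0\<close>
    by (simp_all add: normal_cdf_def)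
  have qq_M: "W1 (cdf M) (normal_cdf \<mu> \<sigma>) \<le> ennreal ?qq_M"
    using integrable_centered_square[OF prob_space.finite_measure[OF M] M_borel sq_int] var_M \<open>\<sigma> > 0\<close>
    by (intro W1_cdf_normal_cdf_le M_real)
  have scale: "W1 (normal_cdf \<mu> \<sigma>) (normal_cdf \<mu> s) \<le> ennreal ?scale"
  proof -
    have "s \<le> \<sigma>"
      using \<open>\<sigma> > 0\<close> \<open>r \<ge> 1\<close> by (simp add: s_def divide_le_eq mult_le_cancel_left1)
    then have "?scale = \<bar>\<sigma> - s\<bar>"
      by (simp add: s_def right_diff_distrib)
    then show ?thesis
      using W1_normal_cdf_le[OF \<open>\<sigma> > 0\<close> \<open>s > 0\<close>, of \<mu>] by simp
  qed
  have qq_mean: "W1 (normal_cdf \<mu> s) (mean_cdf M r) \<le> ennreal ?qq_mean"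
    unfolding s_def by (rule W1_normal_cdf_mean_cdf_le[OF M M_borel sq_int mu var_M \<open>\<sigma> > 0\<close> \<open>r \<ge> 1\<close>])
  have "W1 (cdf M) (mean_cdf M r)
      \<le> W1 (cdf M) (normal_cdf \<mu> \<sigma>) + (W1 (normal_cdf \<mu> \<sigma>) (normal_cdf \<mu> s) + W1 (normal_cdf \<mu> s) (mean_cdf M r))"
    by (rule order_trans[OF W1_triangle add_left_mono[OF W1_triangle]]) measurable
  also have "\<dots> \<le> ennreal ?qq_M + (ennreal ?scale + ennreal ?qq_mean)"
    by (intro add_mono qq_M scale qq_mean)
  finally show ?thesis
    by (simp only: ac_simps)
qed

section \<open>Empirical distribution functions\<close>

definition empirical_cdf :: "(nat \<Rightarrow> real) \<Rightarrow> nat \<Rightarrow> real \<Rightarrow> real" where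
  "empirical_cdf x n t = real (card {i. i < n \<and> x i \<le> t}) / real n"

lemma empirical_cdf_eq_sum: "empirical_cdf x n t = (\<Sum>i<n. if x i \<le> t then 1 else 0) / real n"
proof -
  have "{i. i < n \<and> x i \<le> t} = {..<n} \<inter> {i. x i \<le> t}"
    by auto
  then show ?thesis
    by (simp add: empirical_cdf_def sum.If_cases)
qed

lemma empirical_cdf_replicated:
  fixes g :: "nat \<Rightarrow> nat"
  assumes "\<forall>i<n. g i < p" and "\<forall>k<p. card {i. i < n \<and> g i = k} = r" and "n = p * r" and "r \<ge> 1"
  shows "empirical_cdf (\<lambda>i. y (g i)) n = empirical_cdf y p"
proof
  fix t
  have "{i. i < n \<and> y (g i) \<le> t} = (\<Union>k\<in>{k. k < p \<and> y k \<le> t}. {i. i < n \<and> g i = k})"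
    using assms(1) by auto
  then have "card {i. i < n \<and> y (g i) \<le> t} = (\<Sum>k\<in>{k. k < p \<and> y k \<le> t}. card {i. i < n \<and> g i = k})"
    by (simp only:) (intro card_UN_disjoint; auto)
  also have "\<dots> = r * card {k. k < p \<and> y k \<le> t}"
    using assms(2) by simp
  finally show "empirical_cdf (\<lambda>i. y (g i)) n t = empirical_cdf y p t"
    using assms(3,4) by (simp add: empirical_cdf_def)
qed

lemma (in prob_space)
  fixes X :: "'a \<Rightarrow> real"
  assumes [measurable]: "X \<in> borel_measurable M" and prob_le: "prob {\<omega>\<in>space M. X \<omega> \<le> t} = c"
  defines "Y \<omega> \<equiv> (if X \<omega> \<le> t then 1 else 0) - c"
  shows integrable_centered_indicator_square: "integrable M (\<lambda>\<omega>. (Y \<omega>)\<^sup>2)"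
    and expectation_centered_indicator: "expectation Y = 0"
    and expectation_centered_indicator_square: "expectation (\<lambda>\<omega>. (Y \<omega>)\<^sup>2) = c * (1 - c)"
proof -
  have indicator_int: "integrable M (\<lambda>\<omega>. if X \<omega> \<le> t then 1 else 0 :: real)"
    by (rule integrable_const_bound[where B=1]) auto
  have "expectation (\<lambda>\<omega>. if X \<omega> \<le> t then 1 else 0) = expectation (indicator {\<omega>\<in>space M. X \<omega> \<le> t})"
    by (intro Bochner_Integration.integral_cong) (auto split: split_indicator)
  also have "\<dots> = c"
    using prob_le by (simp add: Int_absorb2 subsetI)
  finally have indicator_mean: "expectation (\<lambda>\<omega>. if X \<omega> \<le> t then 1 else 0) = c" .
  have Y_square: "(Y \<omega>)\<^sup>2 = (1 - 2 * c) * (if X \<omega> \<le> t then 1 else 0) + c\<^sup>2" for \<omega>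
    by (simp add: Y_def power2_eq_square algebra_simps)
  show "integrable M (\<lambda>\<omega>. (Y \<omega>)\<^sup>2)"
    unfolding Y_square using indicator_int by simp
  show "expectation Y = 0"
    using indicator_int indicator_mean by (simp add: Y_def[abs_def] prob_space)
  show "expectation (\<lambda>\<omega>. (Y \<omega>)\<^sup>2) = c * (1 - c)"
    unfolding Y_square using indicator_int indicator_mean
    by (simp add: prob_space) (simp add: algebra_simps power2_eq_square)
qed

lemma (in prob_space) nn_integral_abs_empirical_cdf_le:
  fixes X :: "nat \<Rightarrow> 'a \<Rightarrow> real"
  assumes "p \<ge> 1"
    and [measurable]: "\<And>k. X k \<in> borel_measurable M"
    and indep: "\<And>k l. k < p \<Longrightarrow> l < p \<Longrightarrow> k \<noteq> l \<Longrightarrow> indep_var borel (X k) borel (X l)"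
    and prob_le: "\<And>k. k < p \<Longrightarrow> prob {\<omega>\<in>space M. X k \<omega> \<le> t} = c"
  shows "(\<integral>\<^sup>+ \<omega>. ennreal \<bar>c - empirical_cdf (\<lambda>k. X k \<omega>) p t\<bar> \<partial>M) \<le> ennreal (sqrt (c * (1 - c) / real p))"
proof -
  define Y where "Y k \<omega> = (if X k \<omega> \<le> t then 1 else 0) - c" for k \<omega>
  have [measurable]: "Y k \<in> borel_measurable M" for k
    unfolding Y_def by measurable
  have Y_indep: "indep_var borel (Y k) borel (Y l)" if "k < p" "l < p" "k \<noteq> l" for k l
    using indep_var_compose[OF indep[OF that], of "\<lambda>x. (if x \<le> t then 1 else 0) - c" borel
        "\<lambda>x. (if x \<le> t then 1 else 0) - c" borel]
    by (simp add: comp_def Y_def[abs_def])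
  have sum_Y: "expectation (\<lambda>\<omega>. (\<Sum>k<p. Y k \<omega>)\<^sup>2) = real p * (c * (1 - c))"
    "integrable M (\<lambda>\<omega>. (\<Sum>k<p. Y k \<omega>)\<^sup>2)"
    using expectation_square_sum_pairwise_indep[of "{..<p}" Y] Y_indep
      integrable_centered_indicator_square[OF _ prob_le] expectation_centered_indicator[OF _ prob_le]
      expectation_centered_indicator_square[OF _ prob_le]
    by (auto simp: Y_def[abs_def])
  have deviation: "\<bar>c - empirical_cdf (\<lambda>k. X k \<omega>) p t\<bar> = \<bar>(\<Sum>k<p. Y k \<omega>) / real p\<bar>" for \<omega>
    using \<open>p \<ge> 1\<close> by (simp add: empirical_cdf_eq_sum Y_def sum_subtractf field_simps abs_minus_commute)
  have "(\<integral>\<^sup>+ \<omega>. ennreal \<bar>c - empirical_cdf (\<lambda>k. X k \<omega>) p t\<bar> \<partial>M)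
      \<le> ennreal (sqrt (expectation (\<lambda>\<omega>. ((\<Sum>k<p. Y k \<omega>) / real p)\<^sup>2)))"
    unfolding deviation using sum_Y(2) by (intro nn_integral_abs_le_sqrt_second_moment) (auto simp: power_divide)
  also have "expectation (\<lambda>\<omega>. ((\<Sum>k<p. Y k \<omega>) / real p)\<^sup>2) = c * (1 - c) / real p"
    using sum_Y(1) \<open>p \<ge> 1\<close> by (simp add: power_divide power2_eq_square)
  finally show ?thesis .
qed

lemma borel_measurable_W1_empirical_cdf:
  assumes [measurable]: "F \<in> borel_measurable borel" "\<And>k. X k \<in> borel_measurable M"
  shows "(\<lambda>\<omega>. W1 F (empirical_cdf (\<lambda>k. X k \<omega>) p)) \<in> borel_measurable M"
  unfolding W1_def empirical_cdf_eq_sum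
  by (rule lborel.borel_measurable_nn_integral) measurable

lemma (in prob_space) nn_integral_W1_empirical_cdf_le:
  fixes X :: "nat \<Rightarrow> 'a \<Rightarrow> real"
  assumes "p \<ge> 1"
    and [measurable]: "\<And>k. X k \<in> borel_measurable M"
    and indep: "\<And>k l. k < p \<Longrightarrow> l < p \<Longrightarrow> k \<noteq> l \<Longrightarrow> indep_var borel (X k) borel (X l)"
    and cdf_X: "\<And>k. k < p \<Longrightarrow> cdf (distr M borel (X k)) = G"
  shows "(\<integral>\<^sup>+ \<omega>. W1 G (empirical_cdf (\<lambda>k. X k \<omega>) p) \<partial>M)
    \<le> ennreal (1 / sqrt (real p)) * (\<integral>\<^sup>+ t. ennreal (sqrt (G t * (1 - G t))) \<partial>lborel)"
proof -
  interpret pair_sigma_finite lborel M by unfold_locales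
  interpret X0: real_distribution "distr M borel (X 0)"
    by (rule real_distribution_distr) simp
  have G_eq: "G = cdf (distr M borel (X 0))"
    using cdf_X \<open>p \<ge> 1\<close> by simp
  have [measurable]: "G \<in> borel_measurable borel"
    unfolding G_eq by (rule borel_measurable_cdf) unfold_locales
  have G_bounds: "0 \<le> G t" "G t \<le> 1" for t
    unfolding G_eq by (simp_all add: X0.cdf_nonneg X0.cdf_bounded_prob)
  have pointwise: "(\<integral>\<^sup>+ \<omega>. ennreal \<bar>G t - empirical_cdf (\<lambda>k. X k \<omega>) p t\<bar> \<partial>M)
      \<le> ennreal (1 / sqrt (real p)) * ennreal (sqrt (G t * (1 - G t)))" for t
  proof -
    have "prob {\<omega>\<in>space M. X k \<omega> \<le> t} = G t" if "k < p" for k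
      using fun_cong[OF cdf_X[OF that], of t] by (simp add: cdf_distr)
    then have "(\<integral>\<^sup>+ \<omega>. ennreal \<bar>G t - empirical_cdf (\<lambda>k. X k \<omega>) p t\<bar> \<partial>M)
        \<le> ennreal (sqrt (G t * (1 - G t) / real p))"
      using indep by (intro nn_integral_abs_empirical_cdf_le \<open>p \<ge> 1\<close>) auto
    also have "\<dots> = ennreal (1 / sqrt (real p)) * ennreal (sqrt (G t * (1 - G t)))"
      using G_bounds[of t] by (simp add: real_sqrt_divide ennreal_mult[symmetric])
    finally show ?thesis .
  qed
  have "(\<integral>\<^sup>+ \<omega>. W1 G (empirical_cdf (\<lambda>k. X k \<omega>) p) \<partial>M)
      = (\<integral>\<^sup>+ t. (\<integral>\<^sup>+ \<omega>. ennreal \<bar>G t - empirical_cdf (\<lambda>k. X k \<omega>) p t\<bar> \<partial>M) \<partial>lborel)"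
    unfolding W1_def by (rule Fubini') (simp add: empirical_cdf_eq_sum)
  also have "\<dots> \<le> (\<integral>\<^sup>+ t. ennreal (1 / sqrt (real p)) * ennreal (sqrt (G t * (1 - G t))) \<partial>lborel)"
    by (intro nn_integral_mono pointwise)
  also have "\<dots> = ennreal (1 / sqrt (real p)) * (\<integral>\<^sup>+ t. ennreal (sqrt (G t * (1 - G t))) \<partial>lborel)"
    by (rule nn_integral_cmult) measurable
  finally show ?thesis .
qed

lemma nn_integral_W1_clique_empirical_cdf_le:
  fixes M :: "real measure" and g :: "nat \<Rightarrow> nat"
  assumes M: "prob_space M" and M_borel: "sets M = sets borel"
    and "p \<ge> 1" "r \<ge> 1" "n = p * r"
    and g_range: "\<forall>i<n. g i < p" and g_card: "\<forall>k<p. card {i. i < n \<and> g i = k} = r"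
  defines "belief \<omega> i \<equiv> (\<Sum>j\<in>{j. j < n \<and> g j = g i}. \<omega> j) / real r"
  shows "(\<lambda>\<omega>. W1 (mean_cdf M r) (empirical_cdf (belief \<omega>) n)) \<in> borel_measurable (PiM {..<n} (\<lambda>_. M))"
    and "(\<integral>\<^sup>+ \<omega>. W1 (mean_cdf M r) (empirical_cdf (belief \<omega>) n) \<partial>PiM {..<n} (\<lambda>_. M))
      \<le> ennreal (1 / sqrt (real p)) * (\<integral>\<^sup>+ t. ennreal (sqrt (mean_cdf M r t * (1 - mean_cdf M r t))) \<partial>lborel)"
proof -
  interpret P: prob_space "PiM {..<n} (\<lambda>_. M)"
    by (rule prob_space_PiM) (rule M)
  have [measurable_cong]: "sets M = sets borel" by fact
  define C where "C k = {j. j < n \<and> g j = k}" for k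
  define mean where "mean k x = (\<Sum>j\<in>C k. x j) / real r" for k and x :: "nat \<Rightarrow> real"
  have C_sub: "C k \<subseteq> {..<n}" for k
    by (auto simp: C_def)
  have component: "(\<lambda>x. x j) \<in> borel_measurable (PiM I (\<lambda>_. M))" if "j \<in> I" for j I
    using measurable_component_singleton[OF that, of "\<lambda>_. M"] measurable_cong_sets[OF refl M_borel] by blast
  have mean_meas: "mean k \<in> borel_measurable (PiM I (\<lambda>_. M))" if "C k \<subseteq> I" for k I
    unfolding mean_def[abs_def] using that
    by (intro borel_measurable_divide borel_measurable_const borel_measurable_sum component) auto
  define X where "X k \<omega> = mean k (restrict \<omega> (C k))" for k \<omega>
  have X_eq: "X k \<omega> = mean k \<omega>" for k \<omega>
    by (simp add: X_def mean_def)
  have [measurable]: "X k \<in> borel_measurable (PiM {..<n} (\<lambda>_. M))" for k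
    unfolding X_eq[abs_def] by (rule mean_meas[OF C_sub])
  have belief_eq: "empirical_cdf (belief \<omega>) n = empirical_cdf (\<lambda>k. X k \<omega>) p" for \<omega>
    using empirical_cdf_replicated[OF g_range g_card \<open>n = p * r\<close> \<open>r \<ge> 1\<close>, of "\<lambda>k. X k \<omega>"]
    by (simp add: X_eq mean_def C_def belief_def[abs_def])
  have "P.indep_var borel (X k) borel (X l)" if "k \<noteq> l" for k l
    unfolding X_def using that C_sub by (intro indep_var_PiM_restrict M mean_meas) (auto simp: C_def)
  moreover have "cdf (distr (PiM {..<n} (\<lambda>_. M)) borel (X k)) = mean_cdf M r" if "k < p" for k
  proof -
    have "card (C k) = r"
      using that g_card by (simp add: C_def)
    then show ?thesis
      using distr_PiM_block_mean[OF M M_borel C_sub[of k] finite_subset[OF C_sub finite_lessThan]]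
      by (simp add: X_eq[abs_def] mean_def mean_cdf_def)
  qed
  ultimately show "(\<integral>\<^sup>+ \<omega>. W1 (mean_cdf M r) (empirical_cdf (belief \<omega>) n) \<partial>PiM {..<n} (\<lambda>_. M))
      \<le> ennreal (1 / sqrt (real p)) * (\<integral>\<^sup>+ t. ennreal (sqrt (mean_cdf M r t * (1 - mean_cdf M r t))) \<partial>lborel)"
    unfolding belief_eq using \<open>p \<ge> 1\<close> by (intro P.nn_integral_W1_empirical_cdf_le) auto
  show "(\<lambda>\<omega>. W1 (mean_cdf M r) (empirical_cdf (belief \<omega>) n)) \<in> borel_measurable (PiM {..<n} (\<lambda>_. M))"
    unfolding belief_eq by (intro borel_measurable_W1_empirical_cdf borel_measurable_mean_cdf M M_borel) auto
qed

theorem proposition2: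
  fixes M :: "real measure" and \<mu> \<sigma> :: real and p r n :: nat
    and g :: "nat \<Rightarrow> nat"
  assumes M_prob: "prob_space M"
    and M_borel: "sets M = sets borel"
    and sq_int: "integrable M (\<lambda>x. x ^ 2)"
    and mu_def: "\<mu> = integral\<^sup>L M (\<lambda>x. x)"
    and sigma_def: "\<sigma> = sqrt (integral\<^sup>L M (\<lambda>x. (x - \<mu>) ^ 2))"
    and sigma_pos: "\<sigma> > 0"
    and p_pos: "p \<ge> 1" and r_pos: "r \<ge> 1" and n_def: "n = p * r"
    and g_range: "\<forall>i<n. g i < p"
    and g_card: "\<forall>k<p. card {i. i < n \<and> g i = k} = r"
  shows
    "(\<integral>\<^sup>+ \<omega>. W1 (cdf M)
          (\<lambda>t. real (card {i. i < n \<and>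
                 (\<Sum>j\<in>{j. j < n \<and> g j = g i}. \<omega> j) / real r \<le> t}) / real n)
       \<partial>(PiM {..<n} (\<lambda>_. M)))
     \<le> ennreal (\<sigma> * (1 - 1 / sqrt (real r)))
       + ennreal (1 / sqrt (real p)) *
           (\<integral>\<^sup>+ t. ennreal (sqrt (mean_cdf M r t * (1 - mean_cdf M r t))) \<partial>lborel)
       + ennreal (\<sigma> * sqrt (2 * (1 - qq_corr (cdf M) (normal_cdf \<mu> \<sigma>) \<mu> \<mu> \<sigma> \<sigma>)))
       + ennreal (\<sigma> * sqrt (2 / real r *
           (1 - qq_corr (mean_cdf M r) (normal_cdf \<mu> (\<sigma> / sqrt (real r)))
                  \<mu> \<mu> (\<sigma> / sqrt (real r)) (\<sigma> / sqrt (real r)))))"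
proof -
  let ?\<Omega> = "PiM {..<n} (\<lambda>_. M)"
  let ?belief = "\<lambda>\<omega> i. (\<Sum>j\<in>{j. j < n \<and> g j = g i}. \<omega> j) / real r"
  interpret \<Omega>: prob_space ?\<Omega>
    by (rule prob_space_PiM) (rule M_prob)
  have M_real: "real_distribution M"
    using M_prob M_borel by (simp add: real_distribution_def real_distribution_axioms_def)
  note empirical = nn_integral_W1_clique_empirical_cdf_le[OF M_prob M_borel p_pos r_pos n_def g_range g_card]
  have "(\<integral>\<^sup>+ \<omega>. W1 (cdf M) (empirical_cdf (?belief \<omega>) n) \<partial>?\<Omega>)
      \<le> (\<integral>\<^sup>+ \<omega>. W1 (cdf M) (mean_cdf M r) + W1 (mean_cdf M r) (empirical_cdf (?belief \<omega>) n) \<partial>?\<Omega>)"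
    using borel_measurable_cdf[OF M_real] borel_measurable_mean_cdf[OF M_prob M_borel]
    by (intro nn_integral_mono W1_triangle) (auto simp: empirical_cdf_eq_sum[abs_def])
  also have "\<dots> = W1 (cdf M) (mean_cdf M r) + (\<integral>\<^sup>+ \<omega>. W1 (mean_cdf M r) (empirical_cdf (?belief \<omega>) n) \<partial>?\<Omega>)"
    using empirical(1) by (subst nn_integral_add) (auto simp: \<Omega>.emeasure_space_1)
  also have "\<dots> \<le> (ennreal (\<sigma> * (1 - 1 / sqrt (real r)))
      + ennreal (\<sigma> * sqrt (2 * (1 - qq_corr (cdf M) (normal_cdf \<mu> \<sigma>) \<mu> \<mu> \<sigma> \<sigma>)))
      + ennreal (\<sigma> * sqrt (2 / real r *
          (1 - qq_corr (mean_cdf M r) (normal_cdf \<mu> (\<sigma> / sqrt (real r)))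
                 \<mu> \<mu> (\<sigma> / sqrt (real r)) (\<sigma> / sqrt (real r))))))
      + ennreal (1 / sqrt (real p)) * (\<integral>\<^sup>+ t. ennreal (sqrt (mean_cdf M r t * (1 - mean_cdf M r t))) \<partial>lborel)"
    by (intro add_mono empirical(2) W1_cdf_mean_cdf_le M_prob M_borel sq_int mu_def sigma_def sigma_pos r_pos)
  finally show ?thesis
    unfolding empirical_cdf_def[abs_def] by (simp only: ac_simps)
qed

end
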